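(* Let $m,n\ge r\ge1$, let $L:\mathbb{R}^{m\times n}\to\mathbb{R}$ be differentiable, let $\lambda>0$ and $\tau>0$, and let $\mathcal{L}_{L2}(A,B)=L(AB^\top)+\frac{\lambda}{2}\left(\|A\|_F^2+\|B\|_F^2\right)$ for $A\in\mathbb{R}^{m\times r}$, $B\in\mathbb{R}^{n\times r}$. Let $(A(t),B(t))_{t\ge0}$ be a solution of the gradient flow $\tau\dot A=-\nabla_A\mathcal{L}_{L2}(A,B)$, $\tau\dot B=-\nabla_B\mathcal{L}_{L2}(A,B)$. Then $A(t)^\top A(t)-B(t)^\top B(t)$ converges exponentially fast to $0$ as $t\to\infty$.
   Context: $\|\cdot\|_F$ is the Frobenius norm. "Converges exponentially fast to 0" means its norm is bounded by $Ce^{-ct}$ for some constants $C,c>0$. *)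

theory Defs
  imports "HOL-Analysis.Analysis"
begin

definition frob_norm :: "real^'n^'m \<Rightarrow> real" where
  "frob_norm X = sqrt (\<Sum>i\<in>UNIV. \<Sum>j\<in>UNIV. (X $ i $ j)^2)"

text \<open>g is the gradient of f at x (w.r.t. the Frobenius inner product, which is
  the inner product of the Euclidean space of matrices).\<close>
definition is_gradient :: "('a::real_inner \<Rightarrow> real) \<Rightarrow> 'a \<Rightarrow> 'a \<Rightarrow> bool" where
  "is_gradient f x g \<longleftrightarrow> (f has_derivative (\<lambda>h. g \<bullet> h)) (at x)"

definition L2_obj :: "(real^'n^'m \<Rightarrow> real) \<Rightarrow> real \<Rightarrow> real^'r^'m \<Rightarrow> real^'r^'n \<Rightarrow> real" where
  "L2_obj L lam A B = L (A ** transpose B) + lam / 2 * ((frob_norm A)^2 + (frob_norm B)^2)"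

end

theory Submission
  imports Defs
begin

text \<open>Let \<open>G\<close> be the gradient of \<open>L\<close> at \<open>A B\<^sup>T\<close>. The flow reads
  \<open>\<tau> A' = - (G B + \<lambda> A)\<close> and \<open>\<tau> B' = - (G\<^sup>T A + \<lambda> B)\<close>. In the derivative of the imbalance
  \<open>D = A\<^sup>T A - B\<^sup>T B\<close> the cross terms \<open>A\<^sup>T G B\<close> and \<open>B\<^sup>T G\<^sup>T A\<close> occur in both Gram
  matrices and cancel, leaving the linear equation \<open>\<tau> D' = - 2 \<lambda> D\<close>. Hence
  \<open>D(t) = exp (- 2 \<lambda> t / \<tau>) D(0)\<close>.\<close>

lemma frob_norm_eq_norm: "frob_norm X = norm X"
  unfolding frob_norm_def norm_vec_def L2_set_def
  by (simp add: sum_nonneg)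

lemma bounded_bilinear_matrix_matrix_mult:
  "bounded_bilinear ((**) :: real^'n^'m \<Rightarrow> real^'p^'n \<Rightarrow> real^'p^'m)"
  unfolding bilinear_conv_bounded_bilinear[symmetric] bilinear_def
  by (auto intro!: linearI simp: vec_eq_iff matrix_matrix_mult_def sum.distrib sum_distrib_left algebra_simps)

lemma bounded_linear_transpose: "bounded_linear (transpose :: real^'n^'m \<Rightarrow> real^'m^'n)"
  unfolding linear_conv_bounded_linear[symmetric]
  by (rule linearI) (simp_all add: vec_eq_iff transpose_def)

lemma transpose_add: "transpose (X + Y) = transpose X + transpose (Y :: real^'n^'m)"
  by (simp add: vec_eq_iff transpose_def)

lemma transpose_uminus: "transpose (- X) = - transpose (X :: real^'n^'m)"
  by (simp add: vec_eq_iff transpose_def)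

lemma inner_transpose: "transpose X \<bullet> transpose Y = X \<bullet> (Y :: real^'n^'m)"
  unfolding inner_vec_def transpose_def by (simp add: sum.swap[of _ "UNIV::'n set"])

lemma inner_matrix_mult_transpose_right:
  "G \<bullet> (H ** transpose B) = (G ** B) \<bullet> (H :: real^'r^'m)"
  for G :: "real^'n^'m"
  unfolding inner_vec_def matrix_matrix_mult_def transpose_def
  by (simp add: sum_distrib_left sum_distrib_right mult_ac sum.swap[of _ "UNIV::'n set"])

lemma inner_matrix_mult_transpose_left:
  "G \<bullet> (A ** transpose K) = (transpose G ** A) \<bullet> (K :: real^'r^'n)"
  for G :: "real^'n^'m"
  by (metis inner_transpose inner_matrix_mult_transpose_right matrix_transpose_mul transpose_transpose)

lemma is_gradient_unique:
  assumes "is_gradient f x g" and "is_gradient f x g'"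
  shows "g = g'"
proof -
  have "(\<lambda>h. g \<bullet> h) = (\<lambda>h. g' \<bullet> h)"
    using assms unfolding is_gradient_def by (rule has_derivative_unique)
  then show ?thesis
    by (metis vector_eq_rdot)
qed

lemma differentiable_imp_is_gradient:
  fixes f :: "'a::euclidean_space \<Rightarrow> real"
  assumes "f differentiable (at x)"
  obtains g where "is_gradient f x g"
proof -
  obtain D where D: "(f has_derivative D) (at x)"
    using assms unfolding differentiable_def by blast
  have "D = (\<lambda>h. adjoint D 1 \<bullet> h)"
    using adjoint_works[OF has_derivative_linear[OF D], of _ 1] by (simp add: inner_commute)
  with D show ?thesis
    using that unfolding is_gradient_def by metis
qed

lemma is_gradient_L2_obj_left:
  assumes "is_gradient L (A ** transpose B) G"
  shows "is_gradient (\<lambda>X. L2_obj L lam X B) A (G ** B + lam *\<^sub>R A)"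
proof -
  have "((\<lambda>X. X ** transpose B) has_derivative (\<lambda>H. H ** transpose B)) (at A)"
    by (rule bounded_linear.has_derivative[OF bounded_bilinear.bounded_linear_left
          [OF bounded_bilinear_matrix_matrix_mult] has_derivative_ident])
  then have "((\<lambda>X. L (X ** transpose B)) has_derivative (\<lambda>H. G \<bullet> (H ** transpose B))) (at A)"
    using diff_chain_at assms unfolding is_gradient_def o_def by fastforce
  then have "((\<lambda>X. L2_obj L lam X B) has_derivative
      (\<lambda>H. G \<bullet> (H ** transpose B) + lam / 2 * ((A \<bullet> H + H \<bullet> A) + 0))) (at A)"
    unfolding L2_obj_def frob_norm_eq_norm power2_norm_eq_inner
    by (intro has_derivative_add has_derivative_mult_right has_derivative_const
          has_derivative_inner has_derivative_ident)
  then show ?thesis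
    unfolding is_gradient_def
    by (rule has_derivative_eq_rhs)
      (simp add: fun_eq_iff inner_matrix_mult_transpose_right inner_commute[of _ A] algebra_simps)
qed

lemma is_gradient_L2_obj_right:
  assumes "is_gradient L (A ** transpose B) G"
  shows "is_gradient (\<lambda>Y. L2_obj L lam A Y) B (transpose G ** A + lam *\<^sub>R B)"
proof -
  have "((\<lambda>Y. A ** transpose Y) has_derivative (\<lambda>K. A ** transpose K)) (at B)"
    by (rule bounded_linear.has_derivative[OF bounded_linear_compose
          [OF bounded_bilinear.bounded_linear_right[OF bounded_bilinear_matrix_matrix_mult]
            bounded_linear_transpose] has_derivative_ident])
  then have "((\<lambda>Y. L (A ** transpose Y)) has_derivative (\<lambda>K. G \<bullet> (A ** transpose K))) (at B)"
    using diff_chain_at assms unfolding is_gradient_def o_def by fastforce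
  then have "((\<lambda>Y. L2_obj L lam A Y) has_derivative
      (\<lambda>K. G \<bullet> (A ** transpose K) + lam / 2 * (0 + (B \<bullet> K + K \<bullet> B)))) (at B)"
    unfolding L2_obj_def frob_norm_eq_norm power2_norm_eq_inner
    by (intro has_derivative_add has_derivative_mult_right has_derivative_const
          has_derivative_inner has_derivative_ident)
  then show ?thesis
    unfolding is_gradient_def
    by (rule has_derivative_eq_rhs)
      (simp add: fun_eq_iff inner_matrix_mult_transpose_left inner_commute[of _ B] algebra_simps)
qed

definition imbalance :: "real^'r^'m \<Rightarrow> real^'r^'n \<Rightarrow> real^'r^'r" where
  "imbalance A B = transpose A ** A - transpose B ** B"

lemma has_vector_derivative_imbalance:
  assumes "(A has_vector_derivative A') (at t within S)"
    and "(B has_vector_derivative B') (at t within S)"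
  shows "((\<lambda>t. imbalance (A t) (B t)) has_vector_derivative
      (transpose (A t) ** A' + transpose A' ** A t) - (transpose (B t) ** B' + transpose B' ** B t))
      (at t within S)"
  unfolding imbalance_def
  by (intro has_vector_derivative_diff
      bounded_bilinear.has_vector_derivative[OF bounded_bilinear_matrix_matrix_mult]
      bounded_linear.has_vector_derivative[OF bounded_linear_transpose] assms)

lemma imbalance_L2_gradients:
  fixes G :: "real^'n^'m" and A :: "real^'r^'m" and B :: "real^'r^'n" and lam :: real
  defines "gA \<equiv> G ** B + lam *\<^sub>R A" and "gB \<equiv> transpose G ** A + lam *\<^sub>R B"
  shows "(transpose A ** gA + transpose gA ** A) - (transpose B ** gB + transpose gB ** B)
    = (2 * lam) *\<^sub>R imbalance A B"
  unfolding gA_def gB_def imbalance_def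
    transpose_add transpose_scalar
    bounded_bilinear.add_left[OF bounded_bilinear_matrix_matrix_mult]
    bounded_bilinear.add_right[OF bounded_bilinear_matrix_matrix_mult]
    bounded_bilinear.scaleR_left[OF bounded_bilinear_matrix_matrix_mult]
    bounded_bilinear.scaleR_right[OF bounded_bilinear_matrix_matrix_mult]
  by (simp add: matrix_transpose_mul matrix_mul_assoc scaleR_conv_of_real algebra_simps)

lemma gradient_flow_imbalance_derivative:
  fixes L :: "real^'n^'m \<Rightarrow> real" and A :: "real \<Rightarrow> real^'r^'m" and B :: "real \<Rightarrow> real^'r^'n"
  assumes "L differentiable (at (A t ** transpose (B t)))"
    and "is_gradient (\<lambda>X. L2_obj L lam X (B t)) (A t) gA"
    and "is_gradient (\<lambda>Y. L2_obj L lam (A t) Y) (B t) gB"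
    and "(A has_vector_derivative (- (1/\<tau>) *\<^sub>R gA)) (at t within S)"
    and "(B has_vector_derivative (- (1/\<tau>) *\<^sub>R gB)) (at t within S)"
  shows "((\<lambda>t. imbalance (A t) (B t)) has_vector_derivative
      (- (2 * lam / \<tau>)) *\<^sub>R imbalance (A t) (B t)) (at t within S)"
proof -
  obtain G where G: "is_gradient L (A t ** transpose (B t)) G"
    using assms(1) by (rule differentiable_imp_is_gradient)
  have gA: "gA = G ** B t + lam *\<^sub>R A t"
    using assms(2) is_gradient_L2_obj_left[OF G] by (rule is_gradient_unique)
  have gB: "gB = transpose G ** A t + lam *\<^sub>R B t"
    using assms(3) is_gradient_L2_obj_right[OF G] by (rule is_gradient_unique)
  let ?A' = "- (1/\<tau>) *\<^sub>R gA" and ?B' = "- (1/\<tau>) *\<^sub>R gB"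
  have "(transpose (A t) ** ?A' + transpose ?A' ** A t) - (transpose (B t) ** ?B' + transpose ?B' ** B t)
    = (- (1/\<tau>)) *\<^sub>R ((transpose (A t) ** gA + transpose gA ** A t)
      - (transpose (B t) ** gB + transpose gB ** B t))"
    by (simp add: transpose_uminus transpose_scalar scaleR_diff_right scaleR_add_right
        bounded_bilinear.minus_left[OF bounded_bilinear_matrix_matrix_mult]
        bounded_bilinear.minus_right[OF bounded_bilinear_matrix_matrix_mult]
        bounded_bilinear.scaleR_left[OF bounded_bilinear_matrix_matrix_mult]
        bounded_bilinear.scaleR_right[OF bounded_bilinear_matrix_matrix_mult])
  also have "\<dots> = (- (1/\<tau>)) *\<^sub>R ((2 * lam) *\<^sub>R imbalance (A t) (B t))"
    unfolding gA gB imbalance_L2_gradients ..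
  also have "\<dots> = (- (2 * lam / \<tau>)) *\<^sub>R imbalance (A t) (B t)"
    by simp
  finally show ?thesis
    using has_vector_derivative_imbalance[OF assms(4,5)] by simp
qed

lemma exp_solution_of_linear_ode:
  fixes f :: "real \<Rightarrow> 'a::real_normed_vector"
  assumes "\<And>t. t \<ge> 0 \<Longrightarrow> (f has_vector_derivative c *\<^sub>R f t) (at t within {0..})"
    and "t \<ge> 0"
  shows "f t = exp (c * t) *\<^sub>R f 0"
proof -
  have deriv: "((\<lambda>s. exp (- c * s) *\<^sub>R f s) has_vector_derivative 0) (at s within {0..})"
    if "s \<in> {0..}" for s
    using that by (auto intro!: derivative_eq_intros assms(1) simp: algebra_simps)
  obtain k where k: "\<And>s. s \<in> {0..} \<Longrightarrow> exp (- c * s) *\<^sub>R f s = k"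
    using has_vector_derivative_zero_constant[OF convex_real_interval(1) deriv] by blast
  have "f t = exp (c * t) *\<^sub>R (exp (- c * t) *\<^sub>R f t)"
    by (simp flip: exp_add)
  also have "\<dots> = exp (c * t) *\<^sub>R f 0"
    using k[of t] k[of 0] assms(2) by simp
  finally show ?thesis .
qed

theorem lemma2:
  fixes L :: "real^'n^'m \<Rightarrow> real"
    and A :: "real \<Rightarrow> real^'r^'m"
    and B :: "real \<Rightarrow> real^'r^'n"
    and lam \<tau> :: real
  assumes "CARD('r) \<le> CARD('m)" and "CARD('r) \<le> CARD('n)"
    and "\<And>X. L differentiable (at X)"
    and "lam > 0" and "\<tau> > 0"
    and flow: "\<And>t. t \<ge> 0 \<Longrightarrow> \<exists>gA gB.
        is_gradient (\<lambda>X. L2_obj L lam X (B t)) (A t) gA \<and>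
        is_gradient (\<lambda>Y. L2_obj L lam (A t) Y) (B t) gB \<and>
        (A has_vector_derivative (- (1/\<tau>) *\<^sub>R gA)) (at t within {0..}) \<and>
        (B has_vector_derivative (- (1/\<tau>) *\<^sub>R gB)) (at t within {0..})"
  shows "\<exists>C c. C > 0 \<and> c > 0 \<and> (\<forall>t\<ge>0.
     frob_norm (transpose (A t) ** A t - transpose (B t) ** B t) \<le> C * exp (- c * t))"
proof -
  define c where "c = 2 * lam / \<tau>"
  define C where "C = norm (imbalance (A 0) (B 0)) + 1"
  have "((\<lambda>t. imbalance (A t) (B t)) has_vector_derivative (- c) *\<^sub>R imbalance (A t) (B t))
      (at t within {0..})" if t: "t \<ge> 0" for t
  proof -
    obtain gA gB where
        "is_gradient (\<lambda>X. L2_obj L lam X (B t)) (A t) gA"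
        "is_gradient (\<lambda>Y. L2_obj L lam (A t) Y) (B t) gB"
        "(A has_vector_derivative (- (1/\<tau>) *\<^sub>R gA)) (at t within {0..})"
        "(B has_vector_derivative (- (1/\<tau>) *\<^sub>R gB)) (at t within {0..})"
      using flow[OF t] by blast
    from gradient_flow_imbalance_derivative[OF assms(3) this] show ?thesis
      unfolding c_def .
  qed
  then have decay: "imbalance (A t) (B t) = exp (- c * t) *\<^sub>R imbalance (A 0) (B 0)"
    if "t \<ge> 0" for t
    using that by (rule exp_solution_of_linear_ode)
  have "frob_norm (transpose (A t) ** A t - transpose (B t) ** B t) \<le> C * exp (- c * t)"
    if "t \<ge> 0" for t
    unfolding frob_norm_eq_norm C_def imbalance_def[symmetric] decay[OF that]
    by (simp add: distrib_right)
  moreover have "c > 0"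
    using assms(4,5) unfolding c_def by simp
  moreover have "C > 0"
    unfolding C_def by (simp add: add_nonneg_pos)
  ultimately show ?thesis
    by blast
qed

end
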